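(* Let $s,b\ge1$, let $(a_i)$ be the $(s,b)$-Generacci sequence, and let $p\ge1$. If an integer $k\ge2$ has an $(s,b)$-Generacci legal decomposition using only summands from $\{a_1,\dots,a_p\}$, then so does $k-1$. Consequently, the smallest positive integer with no such decomposition using $\{a_1,\dots,a_p\}$ is one more than the largest integer that has one.
   Context: Fix integers $s,b\ge1$. For an increasing sequence of positive integers $(a_i)_{i\ge1}$, the bins are $\mathcal B_n=\{a_{b(n-1)+1},\dots,a_{bn}\}$ for $n\ge1$, and $\mathcal B_n=\emptyset$ for $n\le 0$. An $(s,b)$-Generacci legal decomposition of a positive integer $m$ using this sequence is an expression $m=a_{\ell_1}+\cdots+a_{\ell_k}$ with $a_{\ell_1}>a_{\ell_2}>\cdots>a_{\ell_k}$ such that for all $i$ and all $j$, $\{a_{\ell_i},a_{\ell_{i+1}}\}\not\subset \mathcal B_{j-s}\cup\mathcal B_{j-s+1}\cup\cdots\cup\mathcal B_j$ (so no two summands lie in the same bin, and the bins containing any two summands have at least $s$ bins strictly between them). The $(s,b)$-Generacci sequence is the increasing sequence of positive integers $(a_i)_{i\ge1}$ in which each $a_i$ is the smallest positive integer that has no $(s,b)$-Generacci legal decomposition using only elements of $\{a_1,\dots,a_{i-1}\}$. *)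

theory Defs
  imports Main
begin

text \<open>Bins are described by the index sets of the sequence: the bin B_n consists of the
  terms with indices b(n-1)+1, ..., bn for n \<ge> 1, and is empty for n \<le> 0.
  Since the sequence is strictly increasing (hence injective), membership of a term a_l
  in B_n is the same as membership of the index l in the n-th index bin.\<close>

definition bin_idx :: "nat \<Rightarrow> int \<Rightarrow> nat set" where
  "bin_idx b n = (if n \<le> 0 then {} else {b * (nat n - 1) + 1 .. b * nat n})"

definition legal_decomp :: "nat \<Rightarrow> nat \<Rightarrow> (nat \<Rightarrow> nat) \<Rightarrow> nat \<Rightarrow> nat \<Rightarrow> bool" where
  "legal_decomp s b a p m \<longleftrightarrow>
     (\<exists>ls. ls \<noteq> [] \<and> set ls \<subseteq> {1..p} \<and>
        sorted_wrt (\<lambda>x y. a x > a y) ls \<and>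
        sum_list (map a ls) = m \<and>
        (\<forall>i. Suc i < length ls \<longrightarrow>
           (\<forall>j::int. \<not> ({ls ! i, ls ! Suc i} \<subseteq> (\<Union>n\<in>{j - int s .. j}. bin_idx b n)))))"

fun gen_list :: "nat \<Rightarrow> nat \<Rightarrow> nat \<Rightarrow> nat list" where
  "gen_list s b 0 = []"
| "gen_list s b (Suc n) =
     (let xs = gen_list s b n
      in xs @ [LEAST m. m > 0 \<and> \<not> legal_decomp s b (\<lambda>i. xs ! (i - 1)) n m])"

text \<open>The (s,b)-Generacci sequence, indexed from 1 (the value at 0 is irrelevant).\<close>

definition generacci :: "nat \<Rightarrow> nat \<Rightarrow> nat \<Rightarrow> nat" where
  "generacci s b i = gen_list s b i ! (i - 1)"

end

theory Submission
  imports Defs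
begin

text \<open>The integers having a legal decomposition with summands among a_1, ..., a_p form an
  interval {1..N_p}. A legal decomposition that uses a_{p+1} must start with it and continue
  with summands at least s+1 bins lower, i.e. among a_1, ..., a_q with q = b(\<lfloor>p/b\<rfloor> - s);
  minimality of a_{p+1} gives a_{p+1} = N_p + 1, and hence by strong induction on p the
  decomposable integers for p+1 are {1..N_p} \<union> {N_p + 1} \<union> (N_p + 1 + {1..N_q}), again an
  interval.\<close>

definition bin_of :: "nat \<Rightarrow> nat \<Rightarrow> int" where
  "bin_of b l = int ((l - 1) div b) + 1"

lemma mem_bin_idx_iff:
  assumes "b \<ge> 1" "l \<ge> 1"
  shows "l \<in> bin_idx b n \<longleftrightarrow> n = bin_of b l"
proof (cases "n \<le> 0")
  case True
  then show ?thesis by (auto simp: bin_idx_def bin_of_def)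
next
  case False
  define k where "k = nat n - 1"
  have n: "\<not> n \<le> 0" "nat n = Suc k"
    using False by (auto simp: k_def)
  have "l \<in> {b * k + 1 .. b * Suc k} \<longleftrightarrow> (l - 1) div b = k"
  proof
    assume "l \<in> {b * k + 1 .. b * Suc k}"
    then show "(l - 1) div b = k" by (intro div_nat_eqI) auto
  next
    assume k: "(l - 1) div b = k"
    have "b * k + (l - 1) mod b = l - 1"
      using k mult_div_mod_eq[of b "l - 1"] by simp
    moreover have "(l - 1) mod b < b"
      using assms by simp
    ultimately show "l \<in> {b * k + 1 .. b * Suc k}"
      using assms(2) by auto
  qed
  moreover have "n = bin_of b l \<longleftrightarrow> (l - 1) div b = k"
    using n by (auto simp: bin_of_def)
  ultimately show ?thesis
    by (simp add: n bin_idx_def)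
qed

definition separated :: "nat \<Rightarrow> nat \<Rightarrow> nat \<Rightarrow> nat \<Rightarrow> bool" where
  "separated s b x y \<longleftrightarrow> (\<forall>j::int. \<not> {x, y} \<subseteq> (\<Union>n\<in>{j - int s..j}. bin_idx b n))"

lemma separated_iff_bin_distance:
  assumes "b \<ge> 1" "x \<ge> 1" "y \<ge> 1"
  shows "separated s b x y \<longleftrightarrow> int s < \<bar>bin_of b x - bin_of b y\<bar>"
proof -
  have "separated s b x y \<longleftrightarrow>
      \<not> (\<exists>j. bin_of b x \<in> {j - int s..j} \<and> bin_of b y \<in> {j - int s..j})"
    using mem_bin_idx_iff[OF assms(1,2)] mem_bin_idx_iff[OF assms(1,3)]
    by (auto simp: separated_def)
  also have "\<dots> \<longleftrightarrow> \<not> \<bar>bin_of b x - bin_of b y\<bar> \<le> int s"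
  proof (rule arg_cong[of _ _ Not], rule iffI)
    assume "\<bar>bin_of b x - bin_of b y\<bar> \<le> int s"
    then show "\<exists>j. bin_of b x \<in> {j - int s..j} \<and> bin_of b y \<in> {j - int s..j}"
      by (intro exI[of _ "max (bin_of b x) (bin_of b y)"]) auto
  qed auto
  also have "\<dots> \<longleftrightarrow> int s < \<bar>bin_of b x - bin_of b y\<bar>"
    by linarith
  finally show ?thesis .
qed

lemma separated_Suc_iff:
  assumes "b \<ge> 1" "1 \<le> l" "l \<le> p"
  shows "separated s b (Suc p) l \<longleftrightarrow> l \<le> b * (p div b - s)"
proof -
  have le: "(l - 1) div b \<le> p div b"
    using assms(3) by (intro div_le_mono) simp
  have "separated s b (Suc p) l \<longleftrightarrow> (l - 1) div b < p div b - s"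
    using le assms by (simp add: separated_iff_bin_distance bin_of_def) linarith
  also have "\<dots> \<longleftrightarrow> l - 1 < b * (p div b - s)"
    using assms(1) by (simp add: div_less_iff_less_mult mult.commute)
  also have "\<dots> \<longleftrightarrow> l \<le> b * (p div b - s)"
    using assms(2) by linarith
  finally show ?thesis .
qed

definition legal_indices :: "nat \<Rightarrow> nat \<Rightarrow> nat \<Rightarrow> nat list \<Rightarrow> bool" where
  "legal_indices s b p ls \<longleftrightarrow>
     set ls \<subseteq> {1..p} \<and> sorted_wrt (>) ls \<and> successively (separated s b) ls"

lemma legal_indices_mono:
  "legal_indices s b p ls \<Longrightarrow> p \<le> p' \<Longrightarrow> legal_indices s b p' ls"
  by (auto simp: legal_indices_def)

lemma legal_indices_Cons_iff:
  "legal_indices s b p (x # ls) \<longleftrightarrow>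
     x \<in> {1..p} \<and> (\<forall>y\<in>set ls. y < x) \<and> (ls \<noteq> [] \<longrightarrow> separated s b x (hd ls))
     \<and> legal_indices s b p ls"
  by (auto simp: legal_indices_def successively_Cons)

lemma mult_div_diff_le: "b * (p div b - s) \<le> (p::nat)"
  by (metis diff_le_self le_trans mult.commute times_div_less_eq_dividend mult_le_mono2)

lemma legal_indices_Suc_iff:
  assumes "b \<ge> 1"
  shows "legal_indices s b (Suc p) ls \<longleftrightarrow>
     legal_indices s b p ls \<or>
     (\<exists>rest. ls = Suc p # rest \<and> legal_indices s b (b * (p div b - s)) rest)"
    (is "_ \<longleftrightarrow> _ \<or> (\<exists>rest. _ \<and> legal_indices s b ?q rest)")
proof
  assume legal: "legal_indices s b (Suc p) ls"
  show "legal_indices s b p ls \<or> (\<exists>rest. ls = Suc p # rest \<and> legal_indices s b ?q rest)"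
  proof (cases "Suc p \<in> set ls")
    case False
    then have "legal_indices s b p ls"
      using legal unfolding legal_indices_def by (auto simp: subset_iff le_Suc_eq)
    then show ?thesis ..
  next
    case True
    then obtain rest where ls: "ls = Suc p # rest"
      using legal by (cases ls) (auto simp: legal_indices_def)
    have "set rest \<subseteq> {1..?q}"
    proof (cases rest)
      case (Cons y ys)
      have "y \<le> ?q"
        using legal assms separated_Suc_iff[of b y p s]
        by (auto simp: ls Cons legal_indices_Cons_iff)
      moreover have "1 \<le> z \<and> z \<le> y" if "z \<in> set rest" for z
        using legal that by (auto simp: ls Cons legal_indices_def)
      ultimately show ?thesis
        by fastforce
    qed simp
    then show ?thesis
      using legal by (auto simp: ls legal_indices_def successively_Cons)
  qed
next
  show "legal_indices s b (Suc p) ls"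
    if "legal_indices s b p ls \<or> (\<exists>rest. ls = Suc p # rest \<and> legal_indices s b ?q rest)"
    using that
  proof
    assume "\<exists>rest. ls = Suc p # rest \<and> legal_indices s b ?q rest"
    then obtain rest where ls: "ls = Suc p # rest" and rest: "legal_indices s b ?q rest"
      by blast
    have "separated s b (Suc p) (hd rest)" if "rest \<noteq> []"
    proof -
      have "hd rest \<in> {1..?q}"
        using rest hd_in_set[OF that] unfolding legal_indices_def by blast
      then show ?thesis
        using separated_Suc_iff[OF assms] mult_div_diff_le[of b p s] by simp
    qed
    then show ?thesis
      using rest mult_div_diff_le[of b p s]
      by (auto simp: ls legal_indices_def successively_Cons)
  qed (auto intro: legal_indices_mono)
qed

lemma not_legal_decomp_0: "\<not> legal_decomp s b a 0 m"
  by (auto simp: legal_decomp_def)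

lemma legal_decomp_mono:
  assumes "legal_decomp s b a p m" "p \<le> p'"
  shows "legal_decomp s b a p' m"
proof -
  have "{1..p} \<subseteq> {1..p'}"
    using assms(2) by auto
  then show ?thesis
    using assms(1) unfolding legal_decomp_def by (blast intro: subset_trans)
qed

lemma legal_decomp_term: "i \<in> {1..p} \<Longrightarrow> legal_decomp s b a p (a i)"
  unfolding legal_decomp_def by (rule exI[of _ "[i]"]) auto

lemma legal_decomp_le_sum: "legal_decomp s b a p m \<Longrightarrow> m \<le> sum a {1..p}"
proof -
  assume "legal_decomp s b a p m"
  then obtain ls where ls: "set ls \<subseteq> {1..p}" "sorted_wrt (\<lambda>x y. a x > a y) ls"
      "sum_list (map a ls) = m"
    unfolding legal_decomp_def by blast
  have "distinct ls"
    using ls(2) by (induction ls) auto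
  then have "m = sum a (set ls)"
    using ls(3) by (simp add: sum_list_distinct_conv_sum_set)
  also have "\<dots> \<le> sum a {1..p}"
    using ls(1) by (intro sum_mono2) auto
  finally show ?thesis .
qed

lemma legal_decomp_cong:
  assumes "\<And>i. i \<in> {1..p} \<Longrightarrow> a i = a' i"
  shows "legal_decomp s b a p m \<longleftrightarrow> legal_decomp s b a' p m"
proof -
  have "map a ls = map a' ls \<and>
      sorted_wrt (\<lambda>x y. a x > a y) ls = sorted_wrt (\<lambda>x y. a' x > a' y) ls"
    if "set ls \<subseteq> {1..p}" for ls
    using that by (induction ls) (auto simp: assms subset_iff)
  then show ?thesis
    unfolding legal_decomp_def by metis
qed

lemma legal_decomp_iff_legal_indices:
  assumes "strict_mono_on {1..} a"
  shows "legal_decomp s b a p m \<longleftrightarrow>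
     (\<exists>ls. ls \<noteq> [] \<and> legal_indices s b p ls \<and> sum_list (map a ls) = m)"
proof -
  have "sorted_wrt (\<lambda>x y. a x > a y) ls \<longleftrightarrow> sorted_wrt (>) ls" if "set ls \<subseteq> {1..p}" for ls
    using that by (induction ls) (auto simp: strict_mono_on_less[OF assms] subset_iff)
  then show ?thesis
    unfolding legal_decomp_def legal_indices_def separated_def successively_conv_nth by metis
qed

lemma legal_decomp_Suc_iff:
  assumes "b \<ge> 1" "strict_mono_on {1..} a"
  shows "legal_decomp s b a (Suc p) m \<longleftrightarrow>
     legal_decomp s b a p m \<or> m = a (Suc p) \<or>
     (\<exists>m'. m = a (Suc p) + m' \<and> legal_decomp s b a (b * (p div b - s)) m')"
proof -
  let ?q = "b * (p div b - s)"
  let ?decomp = "\<lambda>q m. \<exists>ls. ls \<noteq> [] \<and> legal_indices s b q ls \<and> sum_list (map a ls) = m"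
  have "(\<exists>ls. ls \<noteq> [] \<and> (legal_indices s b p ls \<or>
          (\<exists>rest. ls = Suc p # rest \<and> legal_indices s b ?q rest)) \<and> sum_list (map a ls) = m)
      \<longleftrightarrow> ?decomp p m \<or> (\<exists>rest. legal_indices s b ?q rest \<and> a (Suc p) + sum_list (map a rest) = m)"
    by auto
  also have "(\<exists>rest. legal_indices s b ?q rest \<and> a (Suc p) + sum_list (map a rest) = m)
      \<longleftrightarrow> m = a (Suc p) \<or> (\<exists>m'. m = a (Suc p) + m' \<and> ?decomp ?q m')"
  proof
    assume "\<exists>rest. legal_indices s b ?q rest \<and> a (Suc p) + sum_list (map a rest) = m"
    then obtain rest where "legal_indices s b ?q rest" "a (Suc p) + sum_list (map a rest) = m"
      by blast
    then show "m = a (Suc p) \<or> (\<exists>m'. m = a (Suc p) + m' \<and> ?decomp ?q m')"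
      by (cases "rest = []") auto
  next
    have "legal_indices s b ?q []"
      by (simp add: legal_indices_def)
    then show "\<exists>rest. legal_indices s b ?q rest \<and> a (Suc p) + sum_list (map a rest) = m"
      if "m = a (Suc p) \<or> (\<exists>m'. m = a (Suc p) + m' \<and> ?decomp ?q m')"
      using that by force
  qed
  finally show ?thesis
    unfolding legal_decomp_iff_legal_indices[OF assms(2)] legal_indices_Suc_iff[OF assms(1)] .
qed

lemma length_gen_list [simp]: "length (gen_list s b n) = n"
  by (induction n) (auto simp: Let_def)

lemma nth_gen_list_mono:
  assumes "n \<le> n'" "i < n"
  shows "gen_list s b n' ! i = gen_list s b n ! i"
  using assms(1)
proof (induction n' rule: dec_induct)
  case (step k)
  then show ?case
    using assms(2) by (simp add: Let_def nth_append)
qed simp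

lemma generacci_eq_nth_gen_list:
  "i \<in> {1..n} \<Longrightarrow> generacci s b i = gen_list s b n ! (i - 1)"
  unfolding generacci_def by (rule nth_gen_list_mono[symmetric]) auto

lemma generacci_Suc:
  "generacci s b (Suc n) = (LEAST m. m > 0 \<and> \<not> legal_decomp s b (generacci s b) n m)"
proof -
  have "legal_decomp s b (\<lambda>i. gen_list s b n ! (i - 1)) n m \<longleftrightarrow>
      legal_decomp s b (generacci s b) n m" for m
    by (rule legal_decomp_cong) (rule generacci_eq_nth_gen_list[symmetric])
  then show ?thesis
    by (simp add: generacci_def Let_def nth_append)
qed

lemma
  shows generacci_Suc_pos: "generacci s b (Suc n) > 0"
    and generacci_Suc_not_legal: "\<not> legal_decomp s b (generacci s b) n (generacci s b (Suc n))"
    and legal_decomp_below_generacci_Suc: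
      "0 < m \<Longrightarrow> m < generacci s b (Suc n) \<Longrightarrow> legal_decomp s b (generacci s b) n m"
proof -
  let ?P = "\<lambda>m. m > 0 \<and> \<not> legal_decomp s b (generacci s b) n m"
  have "?P (Suc (sum (generacci s b) {1..n}))"
    using legal_decomp_le_sum by fastforce
  then have "?P (generacci s b (Suc n))"
    unfolding generacci_Suc by (rule LeastI)
  then show "generacci s b (Suc n) > 0"
    and "\<not> legal_decomp s b (generacci s b) n (generacci s b (Suc n))"
    by simp_all
  show "legal_decomp s b (generacci s b) n m" if "0 < m" "m < generacci s b (Suc n)"
    using that not_less_Least[of m ?P] unfolding generacci_Suc by blast
qed

lemma generacci_less_Suc:
  assumes "n \<ge> 1"
  shows "generacci s b n < generacci s b (Suc n)"
proof -
  obtain n' where n: "n = Suc n'"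
    using assms by (cases n) auto
  have "legal_decomp s b (generacci s b) n m" if "0 < m" "m \<le> generacci s b n" for m
  proof (cases "m = generacci s b n")
    case True
    then show ?thesis
      using assms legal_decomp_term by simp
  next
    case False
    then have "legal_decomp s b (generacci s b) n' m"
      using that n by (intro legal_decomp_below_generacci_Suc) simp_all
    then show ?thesis
      by (rule legal_decomp_mono) (simp add: n)
  qed
  then show ?thesis
    using generacci_Suc_pos generacci_Suc_not_legal not_le by blast
qed

lemma strict_mono_on_generacci: "strict_mono_on {1..} (generacci s b)"
proof (rule strict_mono_onI)
  fix i j :: nat
  assume "i \<in> {1..}" "i < j"
  show "generacci s b i < generacci s b j"
  proof (rule lift_Suc_mono_less_ivl[where N = "{1..}" and f = "generacci s b"])
    show "generacci s b n < generacci s b (Suc n)" if "n \<in> {1..}" for n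
      using that by (simp add: generacci_less_Suc)
  qed (use \<open>i \<in> {1..}\<close> \<open>i < j\<close> in auto)
qed

lemma generacci_Suc_eq:
  assumes "{m. legal_decomp s b (generacci s b) p m} = {1..N}"
  shows "generacci s b (Suc p) = Suc N"
proof -
  have legal: "legal_decomp s b (generacci s b) p m \<longleftrightarrow> m \<in> {1..N}" for m
    using assms by blast
  show ?thesis
    unfolding generacci_Suc legal by (rule Least_equality) auto
qed

lemma legal_decomp_generacci_interval:
  assumes "b \<ge> 1"
  shows "\<exists>N. {m. legal_decomp s b (generacci s b) p m} = {1..N}"
proof (induction p rule: less_induct)
  case (less p)
  show ?case
  proof (cases p)
    case 0
    then show ?thesis
      using not_legal_decomp_0 by auto
  next
    case (Suc p')
    let ?q = "b * (p' div b - s)"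
    have "?q < p"
      using Suc mult_div_diff_le[of b p' s] by simp
    then obtain M where M: "{m. legal_decomp s b (generacci s b) ?q m} = {1..M}"
      using less by blast
    obtain N where N: "{m. legal_decomp s b (generacci s b) p' m} = {1..N}"
      using less Suc by blast
    have "legal_decomp s b (generacci s b) p m \<longleftrightarrow>
        m \<in> {1..N} \<or> m = Suc N \<or> (\<exists>m'. m = Suc N + m' \<and> m' \<in> {1..M})" for m
      unfolding Suc legal_decomp_Suc_iff[OF assms strict_mono_on_generacci] generacci_Suc_eq[OF N]
      using N M by blast
    also have "\<dots> m \<longleftrightarrow> m \<in> {1..Suc N + M}" for m
      by (auto intro: exI[of _ "m - Suc N"])
    finally show ?thesis
      by blast
  qed
qed

theorem mainTheorem5:
  fixes s b p :: nat
  assumes "s \<ge> 1" and "b \<ge> 1" and "p \<ge> 1"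
  shows "(\<forall>k::nat. k \<ge> 2 \<longrightarrow> legal_decomp s b (generacci s b) p k
                       \<longrightarrow> legal_decomp s b (generacci s b) p (k - 1))
       \<and> (LEAST m::nat. m > 0 \<and> \<not> legal_decomp s b (generacci s b) p m)
           = Max {m. legal_decomp s b (generacci s b) p m} + 1"
proof -
  obtain N where N: "{m. legal_decomp s b (generacci s b) p m} = {1..N}"
    using legal_decomp_generacci_interval[OF assms(2)] by blast
  then have legal: "legal_decomp s b (generacci s b) p m \<longleftrightarrow> m \<in> {1..N}" for m
    by blast
  have "generacci s b p \<in> {1..N}"
    unfolding legal[symmetric] using assms(3) by (intro legal_decomp_term) simp
  then have "Max {m. legal_decomp s b (generacci s b) p m} = N"
    unfolding N by (intro Max_eqI) auto
  moreover have "(LEAST m. m > 0 \<and> \<not> legal_decomp s b (generacci s b) p m) = N + 1"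
    unfolding legal by (rule Least_equality) auto
  ultimately show ?thesis
    unfolding legal by auto
qed

end
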